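(* For every $n\ge2$: (a) there exists an invariant immersed framework in $\mathbb{R}^3$ whose underlying graph is the complete graph $K_{n+2}$ and whose invariance function $\gamma$ is constant; (b) there exists an invariant embedded framework in $\mathbb{R}^n$ whose underlying graph is $K_{n+2}$ and whose invariance function $\gamma$ is constant.
   Context: A framework in $\mathbb{R}^M$ is a finite simple graph $(V,E)$ together with an assignment of a point $\vec x\in\mathbb{R}^M$ to each vertex, edges being straight segments. It is immersed if distinct vertices are assigned distinct points, and embedded if it is immersed and no two edges intersect except at common endpoints. Let $P:\mathbb{R}^M\to\mathbb{C}$, $P(y_1,\dots,y_M)=y_1+iy_2$. The framework is invariant if there is a function $\gamma:V\to\mathbb{R}$ such that for every orthogonal transformation $A$ of $\mathbb{R}^M$, the function $\phi_A(x)=P(A\vec x)$ satisfies, at every vertex $x$ of degree $n(x)$, $\frac{\gamma(x)}{n(x)}\big(\sum_{y\sim x}(\phi_A(y)-\phi_A(x))\big)^2=\sum_{y\sim x}(\phi_A(x)-\phi_A(y))^2$. *)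

theory Defs
  imports Complex_Main
begin

text \<open>Points of R^M are represented as functions nat => real vanishing at every
  index >= M (coordinate y_{k+1} of the paper is the value at k).
  Linear maps of R^M are represented by matrices nat => nat => real,
  of which only entries with both indices < M matter.\<close>

definition in_space :: "nat \<Rightarrow> (nat \<Rightarrow> real) \<Rightarrow> bool" where
  "in_space M y \<longleftrightarrow> (\<forall>k\<ge>M. y k = 0)"

definition mat_apply :: "nat \<Rightarrow> (nat \<Rightarrow> nat \<Rightarrow> real) \<Rightarrow> (nat \<Rightarrow> real) \<Rightarrow> (nat \<Rightarrow> real)" where
  "mat_apply M A y = (\<lambda>i. if i < M then (\<Sum>j<M. A i j * y j) else 0)"

definition orthogonal_mat :: "nat \<Rightarrow> (nat \<Rightarrow> nat \<Rightarrow> real) \<Rightarrow> bool" where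
  "orthogonal_mat M A \<longleftrightarrow>
     (\<forall>i<M. \<forall>j<M. (\<Sum>k<M. A k i * A k j) = (if i = j then 1 else 0))"

definition Pc :: "(nat \<Rightarrow> real) \<Rightarrow> complex" where
  "Pc y = Complex (y 0) (y 1)"

definition simple_graph :: "'v set \<Rightarrow> ('v \<Rightarrow> 'v \<Rightarrow> bool) \<Rightarrow> bool" where
  "simple_graph V E \<longleftrightarrow> finite V \<and> (\<forall>u v. E u v \<longrightarrow> u \<in> V \<and> v \<in> V \<and> u \<noteq> v \<and> E v u)"

definition complete_graph :: "'v set \<Rightarrow> 'v \<Rightarrow> 'v \<Rightarrow> bool" where
  "complete_graph V u v \<longleftrightarrow> u \<in> V \<and> v \<in> V \<and> u \<noteq> v"

definition framework :: "nat \<Rightarrow> 'v set \<Rightarrow> ('v \<Rightarrow> 'v \<Rightarrow> bool) \<Rightarrow> ('v \<Rightarrow> nat \<Rightarrow> real) \<Rightarrow> bool" where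
  "framework M V E x \<longleftrightarrow> simple_graph V E \<and> (\<forall>v\<in>V. in_space M (x v))"

definition immersed_framework :: "nat \<Rightarrow> 'v set \<Rightarrow> ('v \<Rightarrow> 'v \<Rightarrow> bool) \<Rightarrow> ('v \<Rightarrow> nat \<Rightarrow> real) \<Rightarrow> bool" where
  "immersed_framework M V E x \<longleftrightarrow> framework M V E x \<and> inj_on x V"

definition seg :: "(nat \<Rightarrow> real) \<Rightarrow> (nat \<Rightarrow> real) \<Rightarrow> (nat \<Rightarrow> real) set" where
  "seg p q = {(\<lambda>i. (1 - t) * p i + t * q i) | t. 0 \<le> t \<and> t \<le> 1}"

definition embedded_framework :: "nat \<Rightarrow> 'v set \<Rightarrow> ('v \<Rightarrow> 'v \<Rightarrow> bool) \<Rightarrow> ('v \<Rightarrow> nat \<Rightarrow> real) \<Rightarrow> bool" where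
  "embedded_framework M V E x \<longleftrightarrow> immersed_framework M V E x \<and>
     (\<forall>a b c d. E a b \<and> E c d \<and> {a, b} \<noteq> {c, d} \<longrightarrow>
        seg (x a) (x b) \<inter> seg (x c) (x d) \<subseteq> x ` ({a, b} \<inter> {c, d}))"

definition invariant_with :: "nat \<Rightarrow> 'v set \<Rightarrow> ('v \<Rightarrow> 'v \<Rightarrow> bool) \<Rightarrow> ('v \<Rightarrow> nat \<Rightarrow> real) \<Rightarrow> ('v \<Rightarrow> real) \<Rightarrow> bool" where
  "invariant_with M V E x \<gamma> \<longleftrightarrow>
     (\<forall>A. orthogonal_mat M A \<longrightarrow>
       (\<forall>v\<in>V. let \<phi> = (\<lambda>w. Pc (mat_apply M A (x w))); N = {w\<in>V. E v w} in
          complex_of_real (\<gamma> v / real (card N)) * (\<Sum>w\<in>N. \<phi> w - \<phi> v)\<^sup>2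
          = (\<Sum>w\<in>N. (\<phi> v - \<phi> w)\<^sup>2)))"

definition invariant_framework :: "nat \<Rightarrow> 'v set \<Rightarrow> ('v \<Rightarrow> 'v \<Rightarrow> bool) \<Rightarrow> ('v \<Rightarrow> nat \<Rightarrow> real) \<Rightarrow> bool" where
  "invariant_framework M V E x \<longleftrightarrow> framework M V E x \<and> (\<exists>\<gamma>. invariant_with M V E x \<gamma>)"

end

theory Submission
  imports Defs "Jordan_Normal_Form.Determinant"
begin

(* For an orthogonal A, the function phi_A(x) = P(Ax) is a complex-linear functional
   sum_j z_j x_j whose coefficient vector is isotropic (sum_j z_j^2 = 0).  If the vertex points
   of a complete graph K_m have isotropic covariance (second moments m mu mu^T + kappa I), an
   isotropic functional has the same first and second moments as the constant phi(mu), and the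
   invariance equation holds at every vertex with gamma = (m-1)/m.

   Part (a) uses an axes-diagonal configuration in R^3 with
   n - 1 diagonal points; part (b) uses a simplex with its barycentre in R^n, which is also an
   axes-diagonal configuration. *)

(* An orthogonal matrix (A^T A = I) also has orthonormal rows (A A^T = I); proved via the
   finite-dimensional fact that a one-sided inverse of a square matrix is two-sided. *)
lemma orthogonal_mat_rows_orthonormal:
  assumes "Defs.orthogonal_mat M A" "i < M" "j < M"
  shows "(\<Sum>k<M. A i k * A j k) = (if i = j then 1 else 0)"
proof -
  define B where "B = mat M M (\<lambda>(i,j). A i j)"
  have B: "B \<in> carrier_mat M M" "transpose_mat B \<in> carrier_mat M M"
    unfolding B_def by auto
  have "transpose_mat B * B = 1\<^sub>m M"
  proof (rule eq_matI)
    fix i j assume "i < dim_row (1\<^sub>m M)" "j < dim_col (1\<^sub>m M)"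
    then show "(transpose_mat B * B) $$ (i,j) = 1\<^sub>m M $$ (i,j)"
      using assms(1) unfolding Defs.orthogonal_mat_def
      by (simp add: B_def scalar_prod_def lessThan_atLeast0)
  qed (auto simp: B_def)
  then have "B * transpose_mat B = 1\<^sub>m M"
    using mat_mult_left_right_inverse[OF B(2) B(1)] by simp
  then have "(B * transpose_mat B) $$ (i,j) = 1\<^sub>m M $$ (i,j)" by simp
  then show ?thesis
    using assms(2,3) by (simp add: B_def scalar_prod_def lessThan_atLeast0)
qed

lemma sum_Complex: "(\<Sum>j\<in>S. Complex (a j) (b j)) = Complex (\<Sum>j\<in>S. a j) (\<Sum>j\<in>S. b j)"
  by (rule complex_eqI) simp_all

lemma Pc_mat_apply:
  assumes "2 \<le> M"
  shows "Pc (mat_apply M A y) = (\<Sum>j<M. Complex (A 0 j) (A 1 j) * complex_of_real (y j))"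
proof -
  have "Pc (mat_apply M A y) = Complex (\<Sum>j<M. A 0 j * y j) (\<Sum>j<M. A 1 j * y j)"
    using assms unfolding Pc_def mat_apply_def by simp
  also have "\<dots> = (\<Sum>j<M. Complex (A 0 j * y j) (A 1 j * y j))"
    by (simp add: sum_Complex)
  also have "\<dots> = (\<Sum>j<M. Complex (A 0 j) (A 1 j) * complex_of_real (y j))"
    by (rule sum.cong) (auto simp: complex_eq_iff)
  finally show ?thesis .
qed

(* Since the first two rows of an orthogonal matrix are orthonormal, this coefficient vector z
   is isotropic: sum_j z_j^2 = |r_0|^2 - |r_1|^2 + 2i <r_0, r_1> = 0. *)
lemma orthogonal_mat_isotropic_row_pair:
  assumes A: "Defs.orthogonal_mat M A" and M: "2 \<le> M"
  shows "(\<Sum>j<M. Complex (A 0 j) (A 1 j) ^ 2) = 0"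
proof -
  have "(\<Sum>j<M. Complex (A 0 j) (A 1 j) ^ 2)
      = (\<Sum>j<M. Complex (A 0 j * A 0 j - A 1 j * A 1 j) (2 * (A 0 j * A 1 j)))"
    by (rule sum.cong) (auto simp: complex_eq_iff power2_eq_square)
  also have "\<dots> = Complex ((\<Sum>j<M. A 0 j * A 0 j) - (\<Sum>j<M. A 1 j * A 1 j))
                          (2 * (\<Sum>j<M. A 0 j * A 1 j))"
    by (simp add: sum_Complex sum_subtractf sum_distrib_left)
  also have "\<dots> = 0"
    using M orthogonal_mat_rows_orthonormal[OF A, of 0 0] orthogonal_mat_rows_orthonormal[OF A, of 1 1]
      orthogonal_mat_rows_orthonormal[OF A, of 0 1]
    by (simp add: complex_eq_iff)
  finally show ?thesis .
qed

lemma isotropic_functional_moments: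
  fixes x :: "nat \<Rightarrow> nat \<Rightarrow> real" and z :: "nat \<Rightarrow> complex"
  assumes z: "(\<Sum>j<M. z j ^ 2) = 0"
    and mean: "\<And>j. j < M \<Longrightarrow> (\<Sum>v<m. x v j) = real m * \<mu> j"
    and cov: "\<And>j l. j < M \<Longrightarrow> l < M \<Longrightarrow>
       (\<Sum>v<m. x v j * x v l) = real m * \<mu> j * \<mu> l + (if j = l then \<kappa> else 0)"
  defines "\<phi> \<equiv> \<lambda>v. \<Sum>j<M. z j * complex_of_real (x v j)"
    and "f \<equiv> \<Sum>j<M. z j * complex_of_real (\<mu> j)"
  shows "(\<Sum>v<m. \<phi> v) = of_nat m * f" and "(\<Sum>v<m. \<phi> v ^ 2) = of_nat m * f ^ 2"
proof -
  have "(\<Sum>v<m. \<phi> v) = (\<Sum>j<M. z j * complex_of_real (\<Sum>v<m. x v j))"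
    unfolding \<phi>_def by (simp add: sum.swap[of _ "{..<m}"] sum_distrib_left)
  also have "\<dots> = (\<Sum>j<M. of_nat m * (z j * complex_of_real (\<mu> j)))"
    by (rule sum.cong) (auto simp: mean)
  finally show "(\<Sum>v<m. \<phi> v) = of_nat m * f"
    by (simp add: f_def sum_distrib_left)
  have "(\<Sum>v<m. \<phi> v ^ 2)
      = (\<Sum>v<m. \<Sum>j<M. \<Sum>l<M. z j * z l * complex_of_real (x v j * x v l))"
    unfolding \<phi>_def power2_eq_square sum_product by (simp add: algebra_simps)
  also have "\<dots> = (\<Sum>j<M. \<Sum>l<M. z j * z l * complex_of_real (\<Sum>v<m. x v j * x v l))"
    by (simp add: sum.swap[of _ "{..<m}"] sum_distrib_left)
  also have "\<dots> = (\<Sum>j<M. \<Sum>l<M. of_nat m * ((z j * complex_of_real (\<mu> j)) * (z l * complex_of_real (\<mu> l)))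
                      + (if j = l then complex_of_real \<kappa> * z j ^ 2 else 0))"
    by (intro sum.cong refl) (auto simp: cov algebra_simps power2_eq_square)
  also have "\<dots> = of_nat m * f ^ 2 + complex_of_real \<kappa> * (\<Sum>j<M. z j ^ 2)"
    by (simp add: sum.distrib f_def power2_eq_square sum_product sum_distrib_left algebra_simps)
  finally show "(\<Sum>v<m. \<phi> v ^ 2) = of_nat m * f ^ 2"
    using z by simp
qed

(* In the complete graph these moment identities give the invariance equation at v with
   gamma = (m-1)/m: both sides equal m (f - phi v)^2. *)
lemma complete_graph_balance:
  fixes \<phi> :: "nat \<Rightarrow> complex"
  assumes m: "2 \<le> m" and v: "v < m"
    and sum1: "(\<Sum>w<m. \<phi> w) = of_nat m * f" and sum2: "(\<Sum>w<m. \<phi> w ^ 2) = of_nat m * f ^ 2"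
  shows "complex_of_real ((real m - 1) / real m / real (card ({..<m} - {v})))
           * (\<Sum>w\<in>{..<m} - {v}. \<phi> w - \<phi> v)\<^sup>2
         = (\<Sum>w\<in>{..<m} - {v}. (\<phi> v - \<phi> w)\<^sup>2)"
proof -
  have lhs: "(\<Sum>w\<in>{..<m} - {v}. \<phi> w - \<phi> v) = of_nat m * (f - \<phi> v)"
    using v sum1 by (simp add: sum_diff1 sum_subtractf algebra_simps)
  have "(\<Sum>w\<in>{..<m} - {v}. (\<phi> v - \<phi> w)\<^sup>2) = (\<Sum>w<m. \<phi> v ^ 2 - 2 * \<phi> v * \<phi> w + \<phi> w ^ 2)"
    using v by (simp add: sum_diff1 power2_eq_square algebra_simps)
  also have "\<dots> = of_nat m * \<phi> v ^ 2 - 2 * \<phi> v * (\<Sum>w<m. \<phi> w) + (\<Sum>w<m. \<phi> w ^ 2)"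
    by (simp add: sum.distrib sum_subtractf sum_distrib_left)
  finally have rhs: "(\<Sum>w\<in>{..<m} - {v}. (\<phi> v - \<phi> w)\<^sup>2) = of_nat m * (f - \<phi> v)\<^sup>2"
    using sum1 sum2 by (simp add: power2_eq_square algebra_simps)
  have coef: "complex_of_real ((real m - 1) / real m / real (card ({..<m} - {v}))) = 1 / of_nat m"
    using m v by (simp add: of_nat_diff field_simps)
  show ?thesis
    unfolding lhs rhs coef using m by (simp add: power2_eq_square field_simps)
qed

lemma complete_graph_simple: "simple_graph {..<m::nat} (complete_graph {..<m})"
  by (auto simp: simple_graph_def complete_graph_def)

lemma complete_framework_invariant_if_isotropic:
  fixes x :: "nat \<Rightarrow> nat \<Rightarrow> real"
  assumes M: "2 \<le> M" and m: "2 \<le> m"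
    and mean: "\<And>j. j < M \<Longrightarrow> (\<Sum>v<m. x v j) = real m * \<mu> j"
    and cov: "\<And>j l. j < M \<Longrightarrow> l < M \<Longrightarrow>
       (\<Sum>v<m. x v j * x v l) = real m * \<mu> j * \<mu> l + (if j = l then \<kappa> else 0)"
  shows "invariant_with M {..<m} (complete_graph {..<m}) x (\<lambda>_. (real m - 1) / real m)"
  unfolding invariant_with_def Let_def
proof (intro allI impI ballI)
  fix A v assume A: "Defs.orthogonal_mat M A" and v: "v \<in> {..<m}"
  let ?z = "\<lambda>j. Complex (A 0 j) (A 1 j)"
  let ?\<phi> = "\<lambda>w. Pc (mat_apply M A (x w))"
  have \<phi>: "?\<phi> w = (\<Sum>j<M. ?z j * complex_of_real (x w j))" for w
    using Pc_mat_apply[OF M] .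
  note moments = isotropic_functional_moments[OF orthogonal_mat_isotropic_row_pair[OF A M] mean cov]
  have N: "{w \<in> {..<m}. complete_graph {..<m} v w} = {..<m} - {v}"
    using v by (auto simp: complete_graph_def)
  show "complex_of_real ((real m - 1) / real m / real (card {w \<in> {..<m}. complete_graph {..<m} v w}))
          * (\<Sum>w\<in>{w \<in> {..<m}. complete_graph {..<m} v w}. ?\<phi> w - ?\<phi> v)\<^sup>2
        = (\<Sum>w\<in>{w \<in> {..<m}. complete_graph {..<m} v w}. (?\<phi> v - ?\<phi> w)\<^sup>2)"
    unfolding N \<phi> by (rule complete_graph_balance[OF m _ moments]) (use v in simp)
qed

definition axes_diagonal :: "nat \<Rightarrow> real \<Rightarrow> (nat \<Rightarrow> real) \<Rightarrow> nat \<Rightarrow> nat \<Rightarrow> real" where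
  "axes_diagonal M a s v =
     (\<lambda>i. if i < M then (if v < M then (if i = v then a else 0) else s (v - M)) else 0)"

lemma axes_diagonal_in_space: "in_space M (axes_diagonal M a s v)"
  by (simp add: in_space_def axes_diagonal_def)

lemma sum_lessThan_add:
  fixes f :: "nat \<Rightarrow> 'a::comm_monoid_add"
  shows "(\<Sum>i<M + r. f i) = (\<Sum>i<M. f i) + (\<Sum>i<r. f (M + i))"
  by (induction r) (auto simp: add.assoc)

lemma axes_diagonal_invariant:
  assumes M: "2 \<le> M" and balance: "real (M + r) * (\<Sum>j<r. s j ^ 2) = (a + (\<Sum>j<r. s j))\<^sup>2"
  shows "invariant_with M {..<M + r} (complete_graph {..<M + r}) (axes_diagonal M a s)
           (\<lambda>_. (real (M + r) - 1) / real (M + r))"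
proof (rule complete_framework_invariant_if_isotropic[where \<kappa> = "a\<^sup>2"])
  let ?T = "a + (\<Sum>j<r. s j)"
  have mpos: "real (M + r) > 0" using M by simp
  show "2 \<le> M" "2 \<le> M + r" using M by simp_all
  fix j l assume j: "j < M"
  show "(\<Sum>v<M + r. axes_diagonal M a s v j) = real (M + r) * (?T / real (M + r))"
    using j mpos by (simp add: sum_lessThan_add axes_diagonal_def sum.delta)
  assume l: "l < M"
  have axes: "(\<Sum>v<M. (if j = v then a else 0) * (if l = v then a else 0)) = (if j = l then a\<^sup>2 else 0)"
    using j by (simp add: if_distrib[of "\<lambda>u. u * _"] power2_eq_square sum.delta cong: if_cong)
  have "(\<Sum>i<r. s i ^ 2) = ?T\<^sup>2 / real (M + r)"
    using balance mpos by (simp add: eq_divide_eq mult.commute)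
  then have diag: "(\<Sum>i<r. s i ^ 2) = real (M + r) * (?T / real (M + r)) * (?T / real (M + r))"
    using mpos by (simp add: power2_eq_square)
  show "(\<Sum>v<M + r. axes_diagonal M a s v j * axes_diagonal M a s v l)
      = real (M + r) * (?T / real (M + r)) * (?T / real (M + r)) + (if j = l then a\<^sup>2 else 0)"
    using j l axes diag by (simp add: sum_lessThan_add axes_diagonal_def power2_eq_square)
qed

lemma axes_diagonal_inj:
  assumes M: "2 \<le> M" and a: "a \<noteq> 0" and s: "inj_on s {..<r}"
  shows "inj_on (axes_diagonal M a s) {..<M + r}"
proof (rule inj_onI)
  fix u v assume u: "u \<in> {..<M + r}" and v: "v \<in> {..<M + r}"
    and eq: "axes_diagonal M a s u = axes_diagonal M a s v"
  have axis_not_diagonal: False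
    if "u' < M" "\<not> v' < M" "axes_diagonal M a s u' = axes_diagonal M a s v'" for u' v'
  proof -
    obtain i where "i < M" "i \<noteq> u'"
      using M by (intro that[of "if u' = 0 then 1 else 0"]) auto
    then show False
      using that(1,2) fun_cong[OF that(3), of i] fun_cong[OF that(3), of u'] a
      by (simp add: axes_diagonal_def)
  qed
  show "u = v"
  proof (cases "u < M"; cases "v < M")
    assume "u < M" "v < M"
    then show "u = v" using fun_cong[OF eq, of u] a by (simp add: axes_diagonal_def split: if_splits)
  next
    assume "\<not> u < M" "\<not> v < M"
    then have "s (u - M) = s (v - M)" using fun_cong[OF eq, of 0] M by (simp add: axes_diagonal_def)
    then have "u - M = v - M" using s u v \<open>\<not> u < M\<close> \<open>\<not> v < M\<close> by (simp add: inj_on_def)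
    then show "u = v" using \<open>\<not> u < M\<close> \<open>\<not> v < M\<close> by simp
  qed (use axis_not_diagonal eq in \<open>metis\<close>)+
qed

lemma seg_point_cases:
  assumes "y \<in> seg p q"
  shows "y = p \<or> y = q \<or> (\<exists>\<tau>. 0 < \<tau> \<and> \<tau> < 1 \<and> y = (\<lambda>i. (1 - \<tau>) * p i + \<tau> * q i))"
proof -
  obtain \<tau> where \<tau>: "0 \<le> \<tau>" "\<tau> \<le> 1" and y: "y = (\<lambda>i. (1 - \<tau>) * p i + \<tau> * q i)"
    using assms unfolding seg_def by blast
  consider "\<tau> = 0" | "\<tau> = 1" | "0 < \<tau> \<and> \<tau> < 1" using \<tau> by fastforce
  then show ?thesis by cases (use y in auto)
qed

lemma segments_meet_at_common_vertices:
  fixes P :: "'v \<Rightarrow> nat \<Rightarrow> real" and S :: "(nat \<Rightarrow> real) \<Rightarrow> 'v set"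
  assumes inj: "inj_on P V"
    and edge: "\<And>a b. E a b \<Longrightarrow> a \<in> V \<and> b \<in> V \<and> a \<noteq> b"
    and vertex: "\<And>v. v \<in> V \<Longrightarrow> S (P v) = {v}"
    and open_edge: "\<And>a b \<tau>. E a b \<Longrightarrow> 0 < \<tau> \<Longrightarrow> \<tau> < 1 \<Longrightarrow>
                      S (\<lambda>i. (1 - \<tau>) * P a i + \<tau> * P b i) = {a, b}"
    and ab: "E a b" and cd: "E c d" and ne: "{a, b} \<noteq> {c, d}"
  shows "seg (P a) (P b) \<inter> seg (P c) (P d) \<subseteq> P ` ({a, b} \<inter> {c, d})"
proof
  fix y assume y: "y \<in> seg (P a) (P b) \<inter> seg (P c) (P d)"
  have classify: "(\<exists>u\<in>{a', b'}. y = P u) \<or> S y = {a', b'}"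
    if "E a' b'" "y \<in> seg (P a') (P b')" for a' b'
    using seg_point_cases[OF that(2)] open_edge[OF that(1)] by blast
  have y_ab: "(\<exists>u\<in>{a, b}. y = P u) \<or> S y = {a, b}" using classify[OF ab] y by blast
  have y_cd: "(\<exists>u\<in>{c, d}. y = P u) \<or> S y = {c, d}" using classify[OF cd] y by blast
  have ab': "a \<noteq> b" "c \<noteq> d" "a \<in> V" "b \<in> V" "c \<in> V" "d \<in> V"
    using edge[OF ab] edge[OF cd] by auto
  from y_ab y_cd show "y \<in> P ` ({a, b} \<inter> {c, d})"
  proof (elim disjE bexE)
    fix u u' assume "u \<in> {a, b}" "u' \<in> {c, d}" "y = P u" "y = P u'"
    moreover then have "u = u'" using inj ab' by (auto simp: inj_on_def)
    ultimately show ?thesis by blast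
  next
    fix u assume "u \<in> {a, b}" "y = P u" "S y = {c, d}"
    then have "{u} = {c, d}" using vertex ab' by auto
    then show ?thesis using ab' by auto
  next
    fix u assume "u \<in> {c, d}" "y = P u" "S y = {a, b}"
    then have "{u} = {a, b}" using vertex ab' by auto
    then show ?thesis using ab' by auto
  next
    assume "S y = {a, b}" "S y = {c, d}"
    then show ?thesis using ne by simp
  qed
qed

definition simplex_centre_point :: "nat \<Rightarrow> nat \<Rightarrow> nat \<Rightarrow> real" where
  "simplex_centre_point n v k = (if v \<le> n then (if k = v then 1 else 0) else 1 / (real n + 1))"

(* Recovering an edge of the model configuration from one of its interior points: a point
   inside an edge of the simplex has exactly two positive coordinates, while a point inside an
   edge from e_a to the barycentre has all coordinates positive with a strict maximum at a. *)
definition edge_support :: "nat \<Rightarrow> (nat \<Rightarrow> real) \<Rightarrow> nat set" where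
  "edge_support n w =
     (if \<forall>k\<le>n. 0 < w k then insert (n + 1) {k. k \<le> n \<and> (\<forall>j\<le>n. j \<noteq> k \<longrightarrow> w j < w k)}
      else {k. k \<le> n \<and> 0 < w k})"

lemma exists_other_index:
  assumes "2 \<le> n"
  obtains k :: nat where "k \<le> n" "k \<noteq> a" "k \<noteq> b"
proof -
  have "\<exists>k\<in>{0, 1, 2}. k \<noteq> a \<and> k \<noteq> b" by force
  then obtain k where "k \<in> {0, 1, 2}" "k \<noteq> a" "k \<noteq> b" by blast
  moreover have "k \<le> n" using calculation(1) assms by auto
  ultimately show ?thesis using that by blast
qed

lemma edge_support_vertex:
  assumes n: "2 \<le> n" and v: "v \<le> n + 1" and w: "\<And>k. k \<le> n \<Longrightarrow> w k = simplex_centre_point n v k"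
  shows "edge_support n w = {v}"
proof (cases "v \<le> n")
  case True
  obtain k where "k \<le> n" "k \<noteq> v" using exists_other_index[OF n] by metis
  then have not_pos: "\<not> (\<forall>k\<le>n. 0 < w k)" using w True by (auto simp: simplex_centre_point_def)
  have "{k. k \<le> n \<and> 0 < w k} = {v}" using w True by (auto simp: simplex_centre_point_def split: if_splits)
  then show ?thesis unfolding edge_support_def if_not_P[OF not_pos] .
next
  case False
  then have centre: "w k = 1 / (real n + 1)" if "k \<le> n" for k
    using w[OF that] by (simp add: simplex_centre_point_def)
  have no_strict_max: "\<exists>j\<le>n. j \<noteq> k \<and> \<not> w j < w k" if k: "k \<le> n" for k
  proof -
    obtain j where "j \<le> n" "j \<noteq> k" using exists_other_index[OF n, of k k] by metis
    then show ?thesis using centre k by auto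
  qed
  have pos: "\<forall>k\<le>n. 0 < w k" using centre by simp
  have no_max: "{k. k \<le> n \<and> (\<forall>j\<le>n. j \<noteq> k \<longrightarrow> w j < w k)} = {}"
    using no_strict_max by blast
  show ?thesis unfolding edge_support_def if_P[OF pos] no_max using False v by simp
qed

lemma edge_support_simplex_edge:
  assumes n: "2 \<le> n" and ab: "a \<le> n" "b \<le> n" "a \<noteq> b" and \<tau>: "0 < \<tau>" "\<tau> < 1"
    and w: "\<And>k. k \<le> n \<Longrightarrow> w k = (1 - \<tau>) * simplex_centre_point n a k + \<tau> * simplex_centre_point n b k"
  shows "edge_support n w = {a, b}"
proof -
  have wk: "w k = (if k = a then 1 - \<tau> else 0) + (if k = b then \<tau> else 0)" if "k \<le> n" for k
    using w[OF that] ab by (simp add: simplex_centre_point_def)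
  obtain k where "k \<le> n" "k \<noteq> a" "k \<noteq> b" using exists_other_index[OF n] by metis
  then have not_pos: "\<not> (\<forall>k\<le>n. 0 < w k)" using wk by force
  have "{k. k \<le> n \<and> 0 < w k} = {a, b}"
  proof (intro equalityI subsetI)
    fix k assume "k \<in> {k. k \<le> n \<and> 0 < w k}"
    then show "k \<in> {a, b}" using wk[of k] by (cases "k = a"; cases "k = b") auto
  qed (use wk ab \<tau> in auto)
  then show ?thesis unfolding edge_support_def if_not_P[OF not_pos] .
qed

lemma edge_support_centre_edge:
  assumes n: "2 \<le> n" and a: "a \<le> n" and \<tau>: "0 < \<tau>" "\<tau> < 1"
    and w: "\<And>k. k \<le> n \<Longrightarrow> w k = (1 - \<tau>) * simplex_centre_point n a k + \<tau> * simplex_centre_point n (n + 1) k"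
  shows "edge_support n w = {a, n + 1}"
proof -
  have wk: "w k = (if k = a then 1 - \<tau> else 0) + \<tau> / (real n + 1)" if "k \<le> n" for k
    using w[OF that] a by (simp add: simplex_centre_point_def)
  have pos: "\<forall>k\<le>n. 0 < w k" using wk \<tau> by (simp add: add_nonneg_pos)
  have "{k. k \<le> n \<and> (\<forall>j\<le>n. j \<noteq> k \<longrightarrow> w j < w k)} = {a}"
  proof (intro equalityI subsetI)
    fix k assume k: "k \<in> {k. k \<le> n \<and> (\<forall>j\<le>n. j \<noteq> k \<longrightarrow> w j < w k)}"
    show "k \<in> {a}"
    proof (rule ccontr)
      assume "k \<notin> {a}"
      then have "w a < w k" using k a by auto
      then show False using wk[of a] wk[of k] k a \<tau> \<open>k \<notin> {a}\<close> by simp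
    qed
  qed (use wk a \<tau> in auto)
  then show ?thesis unfolding edge_support_def if_P[OF pos] using a by auto
qed

lemma edge_support_open_edge:
  assumes n: "2 \<le> n" and ab: "a \<le> n + 1" "b \<le> n + 1" "a \<noteq> b" and \<tau>: "0 < \<tau>" "\<tau> < 1"
    and w: "\<And>k. k \<le> n \<Longrightarrow> w k = (1 - \<tau>) * simplex_centre_point n a k + \<tau> * simplex_centre_point n b k"
  shows "edge_support n w = {a, b}"
proof -
  consider "a \<le> n" "b \<le> n" | "a \<le> n" "b = n + 1" | "a = n + 1" "b \<le> n" using ab by linarith
  then show ?thesis
  proof cases
    case 1
    then show ?thesis using edge_support_simplex_edge[OF n _ _ ab(3) \<tau> w] by simp
  next
    case 2
    then show ?thesis using edge_support_centre_edge[OF n 2(1) \<tau>, of w] w by simp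
  next
    case 3
    have "w k = (1 - (1 - \<tau>)) * simplex_centre_point n b k + (1 - \<tau>) * simplex_centre_point n (n + 1) k"
      if "k \<le> n" for k
      using w[OF that] 3 by simp
    then show ?thesis using edge_support_centre_edge[OF n 3(2), of "1 - \<tau>" w] \<tau> 3 by auto
  qed
qed

(* Barycentric coordinates with respect to the simplex in R^n with vertices e_0, ..., e_{n-1}
   and t (1,...,1), which is nondegenerate iff n t ~= 1: the last coordinate is the weight of
   the apex t (1,...,1), the others are recovered from it. *)
definition apex_weight :: "nat \<Rightarrow> real \<Rightarrow> (nat \<Rightarrow> real) \<Rightarrow> real" where
  "apex_weight n t y = ((\<Sum>j<n. y j) - 1) / (real n * t - 1)"

definition simplex_bary :: "nat \<Rightarrow> real \<Rightarrow> (nat \<Rightarrow> real) \<Rightarrow> nat \<Rightarrow> real" where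
  "simplex_bary n t y k = (if k = n then apex_weight n t y else y k - t * apex_weight n t y)"

lemma simplex_bary_affine:
  assumes "real n * t \<noteq> 1"
  shows "simplex_bary n t (\<lambda>i. (1 - \<tau>) * p i + \<tau> * q i) k
       = (1 - \<tau>) * simplex_bary n t p k + \<tau> * simplex_bary n t q k"
proof -
  have "(\<Sum>j<n. (1 - \<tau>) * p j + \<tau> * q j) = (1 - \<tau>) * (\<Sum>j<n. p j) + \<tau> * (\<Sum>j<n. q j)"
    by (simp add: sum.distrib sum_distrib_left)
  then have "(\<Sum>j<n. (1 - \<tau>) * p j + \<tau> * q j) - 1
      = (1 - \<tau>) * ((\<Sum>j<n. p j) - 1) + \<tau> * ((\<Sum>j<n. q j) - 1)"
    by (simp add: algebra_simps)
  then have apex: "apex_weight n t (\<lambda>i. (1 - \<tau>) * p i + \<tau> * q i)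
           = (1 - \<tau>) * apex_weight n t p + \<tau> * apex_weight n t q"
    unfolding apex_weight_def by (simp add: add_divide_distrib)
  show ?thesis unfolding simplex_bary_def apex by (simp add: algebra_simps)
qed

(* The simplex e_0, ..., e_{n-1}, t (1,...,1) together with its barycentre, as an
   axes-diagonal configuration in R^n with r = 2 diagonal points. *)
definition simplex_centre_config :: "nat \<Rightarrow> real \<Rightarrow> nat \<Rightarrow> nat \<Rightarrow> real" where
  "simplex_centre_config n t = axes_diagonal n 1 (\<lambda>j. if j = 0 then t else (1 + t) / (real n + 1))"

lemma simplex_bary_config:
  assumes nt: "real n * t \<noteq> 1" and v: "v \<le> n + 1" and k: "k \<le> n"
  shows "simplex_bary n t (simplex_centre_config n t v) k = simplex_centre_point n v k"
proof -
  have np: "real n + 1 > 0" by simp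
  have nt': "real n * t - 1 \<noteq> 0" using nt by simp
  consider "v < n" | "v = n" | "v = n + 1" using v by linarith
  then show ?thesis
  proof cases
    case 1
    have "(\<Sum>j<n. simplex_centre_config n t v j) = 1"
      using 1 by (simp add: simplex_centre_config_def axes_diagonal_def sum.delta')
    then show ?thesis using 1 k
      by (auto simp: simplex_bary_def apex_weight_def simplex_centre_point_def
                     simplex_centre_config_def axes_diagonal_def)
  next
    case 2
    have "apex_weight n t (simplex_centre_config n t v) = 1"
      using 2 nt' by (simp add: apex_weight_def simplex_centre_config_def axes_diagonal_def)
    then show ?thesis using 2 k
      by (auto simp: simplex_bary_def simplex_centre_point_def simplex_centre_config_def axes_diagonal_def)
  next
    case 3
    have "real n * ((1 + t) / (real n + 1)) - 1 = (real n * t - 1) / (real n + 1)"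
      using np by (simp add: field_simps)
    then have "apex_weight n t (simplex_centre_config n t v) = 1 / (real n + 1)"
      using 3 nt' by (simp add: apex_weight_def simplex_centre_config_def axes_diagonal_def)
    then show ?thesis using 3 k np
      by (auto simp: simplex_bary_def simplex_centre_point_def simplex_centre_config_def
                     axes_diagonal_def field_simps)
  qed
qed

lemma simplex_centre_config_embedded:
  assumes n: "2 \<le> n" and nt: "real n * t \<noteq> 1"
  shows "embedded_framework n {..<n + 2} (complete_graph {..<n + 2}) (simplex_centre_config n t)"
proof -
  let ?P = "simplex_centre_config n t"
  let ?S = "\<lambda>y. edge_support n (simplex_bary n t y)"
  have "t \<noteq> (1 + t) / (real n + 1)" using nt by (simp add: field_simps)
  then have "inj_on (\<lambda>j. if j = 0 then t else (1 + t) / (real n + 1)) {..<2::nat}"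
    by (auto simp: inj_on_def)
  from axes_diagonal_inj[OF n _ this] have inj: "inj_on ?P {..<n + 2}"
    unfolding simplex_centre_config_def by simp
  have vertex: "?S (?P v) = {v}" if "v \<in> {..<n + 2}" for v
    using edge_support_vertex[OF n] simplex_bary_config[OF nt] that by simp
  have open_edge: "?S (\<lambda>i. (1 - \<tau>) * ?P a i + \<tau> * ?P b i) = {a, b}"
    if "complete_graph {..<n + 2} a b" "0 < \<tau>" "\<tau> < 1" for a b \<tau>
    using that edge_support_open_edge[OF n] simplex_bary_affine[OF nt] simplex_bary_config[OF nt]
    by (simp add: complete_graph_def)
  have segments: "seg (?P a) (?P b) \<inter> seg (?P c) (?P d) \<subseteq> ?P ` ({a, b} \<inter> {c, d})"
    if "complete_graph {..<n + 2} a b" "complete_graph {..<n + 2} c d" "{a, b} \<noteq> {c, d}" for a b c d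
    using segments_meet_at_common_vertices[OF inj _ vertex open_edge that]
    by (simp add: complete_graph_def)
  have "in_space n (?P v)" for v
    unfolding simplex_centre_config_def by (rule axes_diagonal_in_space)
  then show ?thesis
    unfolding embedded_framework_def immersed_framework_def framework_def
    using complete_graph_simple inj segments by blast
qed

lemma simplex_centre_balance:
  fixes n :: nat
  defines "t \<equiv> - 1 / (sqrt (real n + 1) + 1)"
  shows "real (n + 2) * (\<Sum>j<2::nat. (if j = 0 then t else (1 + t) / (real n + 1))\<^sup>2)
       = (1 + (\<Sum>j<2::nat. if j = 0 then t else (1 + t) / (real n + 1)))\<^sup>2"
proof -
  define q where "q = sqrt (real n + 1)"
  have q: "q > 0" "real n + 1 = q\<^sup>2" "real (n + 2) = q\<^sup>2 + 1" unfolding q_def by simp_all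
  have t: "t = - 1 / (q + 1)" unfolding t_def q_def ..
  have "1 + t = q / (q + 1)" unfolding t using q(1) by (simp add: field_simps)
  then have c: "(1 + t) / (real n + 1) = 1 / (q * (q + 1))"
    unfolding q(2) using q(1) by (simp add: power2_eq_square)
  define d where "d = q * (q + 1)"
  have d: "d \<noteq> 0" "1 / (q + 1) = q / d" unfolding d_def using q(1) by simp_all
  have squares: "t\<^sup>2 + (1 / d)\<^sup>2 = (q\<^sup>2 + 1) / d\<^sup>2"
    unfolding t using d by (simp add: power_divide add_divide_distrib)
  have "1 + (t + 1 / d) = (d - q + 1) / d"
    unfolding t using d by (simp add: field_simps)
  also have "d - q + 1 = q\<^sup>2 + 1" unfolding d_def by (simp add: algebra_simps power2_eq_square)
  finally have sum: "1 + (t + 1 / d) = (q\<^sup>2 + 1) / d" .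
  have "(q\<^sup>2 + 1) * (t\<^sup>2 + (1 / d)\<^sup>2) = (1 + (t + 1 / d))\<^sup>2"
    unfolding squares sum by (simp add: power_divide power2_eq_square)
  moreover have "(\<Sum>j<2::nat. g j) = g 0 + g 1" for g :: "nat \<Rightarrow> real"
    by (simp add: numeral_2_eq_2)
  ultimately show ?thesis unfolding q(3) by (simp add: c flip: t d_def)
qed

lemma axes_diagonal_framework_R3:
  assumes n: "2 \<le> n"
  shows "\<exists>(x :: nat \<Rightarrow> nat \<Rightarrow> real) c.
           immersed_framework 3 {..<n + 2} (complete_graph {..<n + 2}) x \<and>
           invariant_with 3 {..<n + 2} (complete_graph {..<n + 2}) x (\<lambda>_. c)"
proof -
  define r where "r = n - 1"
  define s where "s j = real j + 1" for j :: nat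
  define a where "a = - sqrt (real (3 + r) * (\<Sum>j<r. s j ^ 2)) - (\<Sum>j<r. s j)"
  have size: "n + 2 = 3 + r" unfolding r_def using n by simp
  have sq_pos: "0 < (\<Sum>j<r. s j ^ 2)"
    using n unfolding s_def r_def by (intro sum_pos) (auto simp: lessThan_empty_iff)
  then have "0 < sqrt (real (3 + r) * (\<Sum>j<r. s j ^ 2))" by simp
  moreover have "0 \<le> (\<Sum>j<r. s j)" unfolding s_def by (intro sum_nonneg) simp
  ultimately have a: "a \<noteq> 0" unfolding a_def by linarith
  have balance: "real (3 + r) * (\<Sum>j<r. s j ^ 2) = (a + (\<Sum>j<r. s j))\<^sup>2"
    unfolding a_def using sq_pos by simp
  have "inj_on s {..<r}" unfolding s_def by (simp add: inj_on_def)
  then have "inj_on (axes_diagonal 3 a s) {..<3 + r}" using axes_diagonal_inj[OF _ a] by simp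
  then have "immersed_framework 3 {..<3 + r} (complete_graph {..<3 + r}) (axes_diagonal 3 a s)"
    unfolding immersed_framework_def framework_def
    using complete_graph_simple axes_diagonal_in_space by blast
  moreover have "invariant_with 3 {..<3 + r} (complete_graph {..<3 + r}) (axes_diagonal 3 a s)
                   (\<lambda>_. (real (3 + r) - 1) / real (3 + r))"
    by (rule axes_diagonal_invariant[OF _ balance]) simp
  ultimately show ?thesis unfolding size by blast
qed

lemma simplex_centre_framework:
  assumes n: "2 \<le> n"
  shows "\<exists>(x :: nat \<Rightarrow> nat \<Rightarrow> real) c.
           embedded_framework n {..<n + 2} (complete_graph {..<n + 2}) x \<and>
           invariant_with n {..<n + 2} (complete_graph {..<n + 2}) x (\<lambda>_. c)"
proof -
  define t where "t = - 1 / (sqrt (real n + 1) + 1)"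
  have "t < 0" unfolding t_def by (simp add: add_pos_nonneg)
  then have "real n * t \<noteq> 1" by (smt (verit) mult_nonneg_nonpos of_nat_0_le_iff)
  then show ?thesis
    using simplex_centre_config_embedded[OF n]
      axes_diagonal_invariant[OF n simplex_centre_balance[of n, folded t_def]]
    unfolding simplex_centre_config_def by blast
qed

theorem corollary5p4:
  fixes n :: nat
  assumes "n \<ge> 2"
  shows "(\<exists>(x :: nat \<Rightarrow> nat \<Rightarrow> real) (c :: real).
            immersed_framework 3 {..<n+2} (complete_graph {..<n+2}) x \<and>
            invariant_with 3 {..<n+2} (complete_graph {..<n+2}) x (\<lambda>_. c))
       \<and> (\<exists>(x :: nat \<Rightarrow> nat \<Rightarrow> real) (c :: real).
            embedded_framework n {..<n+2} (complete_graph {..<n+2}) x \<and>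
            invariant_with n {..<n+2} (complete_graph {..<n+2}) x (\<lambda>_. c))"
  using axes_diagonal_framework_R3[OF assms] simplex_centre_framework[OF assms] by blast

end
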